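(* Let $\mathcal C$ be a concept hierarchy and $r_2\in[0,1]$. Let $\mathcal A_1$ be the network defined below. Then for every $B\subseteq C_0$ presented at time 0 and every $c\in supp_{r_2}(B)$, the neuron $rep(c)$ fires at time $level(c)$ in $\mathcal A_1$ (that is, $\mathcal A_1$ guarantees $r_2$-firing for $\mathcal C$).
   Context: Concept hierarchies: fix positive integers $\ell_{max},n,k$. A universal set $D$ of concepts is partitioned into disjoint sets $D_0,\dots,D_{\ell_{max}}$ with $|D_0|=n$; $level(c)=\ell$ for $c\in D_\ell$. A concept hierarchy $\mathcal C$ consists of $C\subseteq D$, with $C_\ell=C\cap D_\ell$, and for each $c\in C_\ell$ with $1\le\ell\le\ell_{max}$ a set $children(c)\subseteq C_{\ell-1}$, such that $|C_{\ell_{max}}|=k$, $|children(c)|=k$ for all such $c$, and $children(c)\cap children(c')=\emptyset$ for distinct $c,c'\in C_\ell$. For $B\subseteq D_0$ and $r\in[0,1]$: $B(0)=B\cap C_0$; for $1\le\ell\le\ell_{max}$, $B(\ell)=\{c\in C_\ell:|children(c)\cap B(\ell-1)|\ge rk\}$; $supp_r(B)=\bigcup_{\ell}B(\ell)$. Network $\mathcal A_1$: neurons partitioned into layers $N_0,\dots,N_{\ell_{max}}$; no failures. Each $c\in D_0$ has a neuron $rep(c)\in N_0$ and each $c\in C$ with $level(c)\ge1$ a neuron $rep(c)\in N_{level(c)}$, all distinct. For $v\in N_\ell$, $\ell\ge1$, and $u\in N_{\ell-1}$, the edge weight $w(u,v)$ is $1$ if $v=rep(c)$ and $u=rep(c')$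 for some child $c'$ of $c$, and $0$ otherwise. Threshold $\tau=r_2k$. Input $B\subseteq C_0$ presented at time 0: layer-0 neurons in $\{rep(b):b\in B\}$ fire at time 0, other layer-0 neurons do not, and no layer-0 neuron fires at any other time. Every neuron $v$ in a layer $\ell\ge1$ does not fire at time 0 and fires at time $t\ge1$ iff $\sum_{u\in N_{\ell-1}}w(u,v)x_u(t-1)\ge\tau$, where $x_u(s)\in\{0,1\}$ indicates whether $u$ fires at time $s$. *)

theory Defs
  imports Complex_Main
begin

definition concept_hierarchy ::
  "nat \<Rightarrow> nat \<Rightarrow> nat \<Rightarrow> 'c set \<Rightarrow> ('c \<Rightarrow> nat) \<Rightarrow> 'c set \<Rightarrow> ('c \<Rightarrow> 'c set) \<Rightarrow> bool" where
  "concept_hierarchy lmax n k D lev C children \<longleftrightarrow>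
     lmax > 0 \<and> n > 0 \<and> k > 0 \<and>
     (\<forall>c\<in>D. lev c \<le> lmax) \<and>
     finite {c\<in>D. lev c = 0} \<and> card {c\<in>D. lev c = 0} = n \<and>
     C \<subseteq> D \<and>
     finite {c\<in>C. lev c = lmax} \<and> card {c\<in>C. lev c = lmax} = k \<and>
     (\<forall>c\<in>C. 1 \<le> lev c \<longrightarrow>
        children c \<subseteq> {c'\<in>C. lev c' = lev c - 1} \<and>
        finite (children c) \<and> card (children c) = k) \<and>
     (\<forall>c\<in>C. \<forall>c'\<in>C. 1 \<le> lev c \<longrightarrow> lev c' = lev c \<longrightarrow> c \<noteq> c' \<longrightarrow>
        children c \<inter> children c' = {})"

fun supp_level ::
  "'c set \<Rightarrow> ('c \<Rightarrow> nat) \<Rightarrow> ('c \<Rightarrow> 'c set) \<Rightarrow> nat \<Rightarrow> real \<Rightarrow> 'c set \<Rightarrow> nat \<Rightarrow> 'c set" where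
  "supp_level C lev children k r B 0 = B \<inter> {c\<in>C. lev c = 0}"
| "supp_level C lev children k r B (Suc l) =
     {c\<in>C. lev c = Suc l \<and>
        real (card (children c \<inter> supp_level C lev children k r B l)) \<ge> r * real k}"

definition supp ::
  "nat \<Rightarrow> 'c set \<Rightarrow> ('c \<Rightarrow> nat) \<Rightarrow> ('c \<Rightarrow> 'c set) \<Rightarrow> nat \<Rightarrow> real \<Rightarrow> 'c set \<Rightarrow> 'c set" where
  "supp lmax C lev children k r B = (\<Union>l\<in>{0..lmax}. supp_level C lev children k r B l)"

definition weight_A1 ::
  "'c set \<Rightarrow> ('c \<Rightarrow> nat) \<Rightarrow> ('c \<Rightarrow> 'c set) \<Rightarrow> ('c \<Rightarrow> 'n) \<Rightarrow> 'n \<Rightarrow> 'n \<Rightarrow> real" where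
  "weight_A1 C lev children rep u v =
     (if \<exists>c\<in>C. 1 \<le> lev c \<and> v = rep c \<and> (\<exists>c'\<in>children c. u = rep c') then 1 else 0)"

fun fires ::
  "'n set \<Rightarrow> ('n \<Rightarrow> nat) \<Rightarrow> ('n \<Rightarrow> 'n \<Rightarrow> real) \<Rightarrow> real \<Rightarrow> 'n set \<Rightarrow> nat \<Rightarrow> 'n \<Rightarrow> bool" where
  "fires N layer w tau X0 0 v = (layer v = 0 \<and> v \<in> X0)"
| "fires N layer w tau X0 (Suc t) v =
     (1 \<le> layer v \<and>
      (\<Sum>u\<in>{u\<in>N. layer u = layer v - 1}. w u v * (if fires N layer w tau X0 t u then 1 else 0)) \<ge> tau)"

definition network_rep ::
  "nat \<Rightarrow> 'c set \<Rightarrow> ('c \<Rightarrow> nat) \<Rightarrow> 'c set \<Rightarrow> 'n set \<Rightarrow> ('n \<Rightarrow> nat) \<Rightarrow> ('c \<Rightarrow> 'n) \<Rightarrow> bool" where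
  "network_rep lmax D lev C N layer rep \<longleftrightarrow>
     finite N \<and> (\<forall>v\<in>N. layer v \<le> lmax) \<and>
     (\<forall>c\<in>D. lev c = 0 \<longrightarrow> rep c \<in> N \<and> layer (rep c) = 0) \<and>
     (\<forall>c\<in>C. 1 \<le> lev c \<longrightarrow> rep c \<in> N \<and> layer (rep c) = lev c) \<and>
     inj_on rep ({c\<in>D. lev c = 0} \<union> C)"

end

theory Submission
  imports Defs
begin

text \<open>Induction on the level: a concept in \<open>B(l+1)\<close> has at least \<open>r k\<close> children in \<open>B(l)\<close>,
  whose representatives fire at time \<open>l\<close> by induction and are joined to \<open>rep c\<close> by edges of
  weight 1, so \<open>rep c\<close> receives input at least \<open>r k\<close> at time \<open>l+1\<close>.\<close>

lemma supp_level_imp_level: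
  "c \<in> supp_level C lev children k r B l \<Longrightarrow> c \<in> C \<and> lev c = l"
  by (cases l) auto

lemma concept_hierarchy_children:
  assumes "concept_hierarchy lmax n k D lev C children" "c \<in> C" "lev c = Suc l"
  shows "children c \<subseteq> {c'\<in>C. lev c' = l}" "finite (children c)"
  using assms unfolding concept_hierarchy_def by fastforce+

lemma network_rep_concept:
  assumes "network_rep lmax D lev C N layer rep" "C \<subseteq> D" "c \<in> C"
  shows "rep c \<in> N" "layer (rep c) = lev c"
  using assms unfolding network_rep_def by (cases "lev c = 0"; force)+

lemma weight_A1_nonneg: "0 \<le> weight_A1 C lev children rep u v"
  by (simp add: weight_A1_def)

lemma weight_A1_child:
  assumes "c \<in> C" "1 \<le> lev c" "c' \<in> children c"
  shows "weight_A1 C lev children rep (rep c') (rep c) = 1"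
  unfolding weight_A1_def using assms by (intro if_P) blast

lemma fires_SucI:
  assumes "finite N" "1 \<le> layer v"
    and U: "U \<subseteq> {u\<in>N. layer u = layer v - 1}"
    and nonneg: "\<And>u. 0 \<le> w u v"
    and active: "\<And>u. u \<in> U \<Longrightarrow> 1 \<le> w u v \<and> fires N layer w tau X0 t u"
    and "tau \<le> real (card U)"
  shows "fires N layer w tau X0 (Suc t) v"
proof -
  define inp where "inp u = w u v * (if fires N layer w tau X0 t u then 1 else 0)" for u
  have "tau \<le> (\<Sum>u\<in>U. 1)" using \<open>tau \<le> real (card U)\<close> by simp
  also have "\<dots> \<le> (\<Sum>u\<in>U. inp u)"
    using active by (intro sum_mono) (simp add: inp_def)
  also have "\<dots> \<le> (\<Sum>u\<in>{u\<in>N. layer u = layer v - 1}. inp u)"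
    using U \<open>finite N\<close> nonneg by (intro sum_mono2) (auto simp: inp_def)
  finally show ?thesis using \<open>1 \<le> layer v\<close> by (simp add: inp_def)
qed

lemma supp_level_fires:
  assumes H: "concept_hierarchy lmax n k D lev C children"
    and R: "network_rep lmax D lev C N layer rep"
    and "c \<in> supp_level C lev children k r B l"
  shows "fires N layer (weight_A1 C lev children rep) (r * real k) (rep ` B) l (rep c)"
  using \<open>c \<in> supp_level C lev children k r B l\<close>
proof (induction l arbitrary: c)
  case 0
  have "C \<subseteq> D" using H by (simp add: concept_hierarchy_def)
  with 0 show ?case using network_rep_concept[OF R] by auto
next
  case (Suc l)
  then have c: "c \<in> C" "lev c = Suc l"
    and many: "r * real k \<le> real (card (children c \<inter> supp_level C lev children k r B l))"
    by auto
  have CD: "C \<subseteq> D" and fin_N: "finite N" and inj: "inj_on rep ({c\<in>D. lev c = 0} \<union> C)"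
    using H R by (auto simp: concept_hierarchy_def network_rep_def)
  define S where "S = children c \<inter> supp_level C lev children k r B l"
  have S_sub: "S \<subseteq> {c'\<in>C. lev c' = l}" and "finite S"
    using concept_hierarchy_children[OF H c] by (auto simp: S_def)
  have layer_c: "layer (rep c) = Suc l"
    using network_rep_concept[OF R CD c(1)] c(2) by simp
  have "card (rep ` S) = card S"
    using inj_on_subset[OF inj] S_sub by (intro card_image) blast
  then have enough: "r * real k \<le> real (card (rep ` S))"
    using many by (simp add: S_def)
  have below: "rep ` S \<subseteq> {u\<in>N. layer u = layer (rep c) - 1}"
    using S_sub network_rep_concept[OF R CD] layer_c by auto
  have active: "1 \<le> weight_A1 C lev children rep u (rep c)
      \<and> fires N layer (weight_A1 C lev children rep) (r * real k) (rep ` B) l u"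
    if u: "u \<in> rep ` S" for u
  proof -
    obtain c' where "u = rep c'" "c' \<in> children c" "c' \<in> supp_level C lev children k r B l"
      using u by (auto simp: S_def)
    then show ?thesis
      using Suc.IH weight_A1_child[of c C lev c' children rep] c by simp
  qed
  show ?case
    by (rule fires_SucI[OF fin_N _ below weight_A1_nonneg active enough]) (simp add: layer_c)
qed

theorem theorem6p1:
  fixes lmax n k :: nat and D C :: "'c set" and lev :: "'c \<Rightarrow> nat"
    and children :: "'c \<Rightarrow> 'c set" and r2 :: real
    and N :: "'n set" and layer :: "'n \<Rightarrow> nat" and rep :: "'c \<Rightarrow> 'n"
  assumes "concept_hierarchy lmax n k D lev C children"
    and "0 \<le> r2" and "r2 \<le> 1"
    and "network_rep lmax D lev C N layer rep"
  shows "\<forall>B. B \<subseteq> {c\<in>C. lev c = 0} \<longrightarrow>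
           (\<forall>c\<in>supp lmax C lev children k r2 B.
              fires N layer (weight_A1 C lev children rep) (r2 * real k) (rep ` B) (lev c) (rep c))"
proof (intro allI impI ballI)
  fix B c assume "c \<in> supp lmax C lev children k r2 B"
  then obtain l where l: "c \<in> supp_level C lev children k r2 B l"
    unfolding supp_def by blast
  then have "lev c = l" by (simp add: supp_level_imp_level)
  with supp_level_fires[OF assms(1,4) l]
  show "fires N layer (weight_A1 C lev children rep) (r2 * real k) (rep ` B) (lev c) (rep c)"
    by (simp only:)
qed

end
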